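(* Let $x$ be an ascent sequence that is a restricted growth function (RGF). Then: (i) $x$ contains $0101$ if and only if $x$ contains $101$; (ii) $x$ contains $0102$ if and only if $x$ contains $102$; (iii) $x$ contains $0120$ if and only if $x$ contains $120$; (iv) $x$ contains $0121$ if and only if $x$ contains $021$.
   Context: An ascent in an integer sequence $s_1\cdots s_m$ is an index $j$ with $s_j<s_{j+1}$; $\mathrm{asc}$ denotes the number of ascents. An ascent sequence is a sequence $x_1\cdots x_n$ of nonnegative integers with $x_1=0$ and $x_i\le 1+\mathrm{asc}(x_1\cdots x_{i-1})$ for all $i\ge2$. The reduction $\mathrm{red}(w)$ of an integer sequence $w$ replaces the $i$-th smallest distinct letter of $w$ by $i-1$; a pattern is a reduced sequence. A sequence $x$ contains a pattern $p=p_1\cdots p_k$ if there are indices $i_1<\cdots<i_k$ with $\mathrm{red}(x_{i_1}\cdots x_{i_k})=p$; otherwise $x$ avoids $p$. A sequence $x_1\cdots x_n$ of nonnegative integers is a restricted growth function (RGF) if for each $k\ge1$, the first occurrence of $k$ in $x$ (if any) is preceded by an occurrence of $k-1$. *)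

theory Defs
  imports Main "HOL-Library.Sublist"
begin

definition asc :: "nat list \<Rightarrow> nat" where
  "asc s = card {j. Suc j < length s \<and> s ! j < s ! Suc j}"

definition ascent_seq :: "nat list \<Rightarrow> bool" where
  "ascent_seq x \<longleftrightarrow> x = [] \<or>
     (x ! 0 = 0 \<and> (\<forall>i. 0 < i \<and> i < length x \<longrightarrow> x ! i \<le> 1 + asc (take i x)))"

definition red :: "nat list \<Rightarrow> nat list" where
  "red w = map (\<lambda>a. card {b \<in> set w. b < a}) w"

definition contains :: "nat list \<Rightarrow> nat list \<Rightarrow> bool" where
  "contains x p \<longleftrightarrow> (\<exists>ys. subseq ys x \<and> red ys = p)"

definition rgf :: "nat list \<Rightarrow> bool" where
  "rgf x \<longleftrightarrow> (\<forall>k i. 1 \<le> k \<and> i < length x \<and> x ! i = k \<and> (\<forall>j<i. x ! j \<noteq> k)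
              \<longrightarrow> (\<exists>j<i. x ! j = k - 1))"

end

theory Submission
  imports Defs
begin

(* In an RGF every letter b > 0 is preceded by every smaller letter: the first occurrence of b
   follows an occurrence of b - 1, and so on downwards. Hence an occurrence of a pattern whose
   first letter is not its minimum extends to the left by a copy of that minimum, which turns
   101, 102, 120 into 0101, 0102, 0120. From an occurrence a c b of 021, first b and then a can
   be prepended to c b, giving the occurrence a b c b of 0121. The converse implications hold for
   every sequence, since each 4-letter pattern contains the corresponding 3-letter one. *)

lemma length_red [simp]: "length (red w) = length w"
  by (simp add: red_def)

lemma strict_mono_on_rank:
  fixes w :: "'a::linorder list"
  shows "strict_mono_on (set w) (\<lambda>a. card {b \<in> set w. b < a})"
proof (rule strict_mono_onI)
  fix a a' assume "a \<in> set w" "a' \<in> set w" "a < a'"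
  then have "{b \<in> set w. b < a} \<subseteq> {b \<in> set w. b < a'}"
    and "a \<in> {b \<in> set w. b < a'} - {b \<in> set w. b < a}" by auto
  then have "{b \<in> set w. b < a} \<subset> {b \<in> set w. b < a'}" by blast
  then show "card {b \<in> set w. b < a} < card {b \<in> set w. b < a'}"
    by (simp add: psubset_card_mono)
qed

lemma red_map_strict_mono:
  assumes "strict_mono_on (set w) f"
  shows "red (map f w) = red w"
proof -
  have "card {b \<in> f ` set w. b < f a} = card {b \<in> set w. b < a}" if "a \<in> set w" for a
  proof -
    have "{b \<in> f ` set w. b < f a} = f ` {b \<in> set w. b < a}"
      using that strict_mono_on_less[OF assms] by auto
    moreover have "inj_on f {b \<in> set w. b < a}"
      using strict_mono_on_imp_inj_on[OF assms] by (rule inj_on_subset) auto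
    ultimately show ?thesis by (simp add: card_image)
  qed
  then show ?thesis unfolding red_def by simp
qed

lemma red_nths_red: "red (nths (red w) I) = red (nths w I)"
proof -
  have "strict_mono_on (set (nths w I)) (\<lambda>a. card {b \<in> set w. b < a})"
    using strict_mono_on_rank set_nths_subset by (rule monotone_on_subset)
  then show ?thesis
    unfolding red_def[of w] nths_map by (rule red_map_strict_mono)
qed

lemma nth_red_less_iff:
  assumes "i < length w" "j < length w"
  shows "red w ! i < red w ! j \<longleftrightarrow> w ! i < w ! j"
proof -
  have "red w ! k = card {b \<in> set w. b < w ! k}" if "k < length w" for k
    using that by (simp add: red_def)
  then show ?thesis
    using assms strict_mono_on_less[OF strict_mono_on_rank nth_mem nth_mem] by simp
qed

lemma red_eq_self:
  assumes "set w = {..<n}"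
  shows "red w = w"
proof -
  have "{b \<in> set w. b < a} = {..<a}" if "a \<in> set w" for a
    using that unfolding assms by auto
  then show ?thesis unfolding red_def by (simp add: map_idI)
qed

lemma red_Cons_mem:
  assumes "v \<in> set w"
  shows "red (v # w) = card {b \<in> set w. b < v} # red w"
  using assms by (simp add: red_def insert_absorb)

lemma contains_trans:
  assumes "contains x p" and "contains p q"
  shows "contains x q"
proof -
  obtain ys where ys: "subseq ys x" "red ys = p"
    using assms(1) unfolding contains_def by blast
  obtain I where "red (nths p I) = q"
    using assms(2) unfolding contains_def subseq_conv_nths by blast
  then have "red (nths ys I) = q"
    using red_nths_red[of ys I] ys(2) by simp
  moreover have "subseq (nths ys I) x"
    using ys(1) subseq_order.trans subseq_conv_nths by blast
  ultimately show ?thesis unfolding contains_def by blast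
qed

lemma contains_reduced_subseq:
  assumes "subseq q p" "set q = {..<n}"
  shows "contains p q"
  using assms red_eq_self unfolding contains_def by blast

lemma rgf_occurs_before:
  assumes "rgf x" "i < length x" "a < x ! i"
  shows "\<exists>j<i. x ! j = a"
  using assms(2,3)
proof (induction "x ! i" arbitrary: i)
  case 0
  then show ?case by simp
next
  case (Suc b)
  define i0 where "i0 = (LEAST k. x ! k = Suc b)"
  have "i0 \<le> i" and i0: "x ! i0 = Suc b" and before_i0: "\<forall>j<i0. x ! j \<noteq> Suc b"
    unfolding i0_def using Suc.hyps(2) by (auto intro: Least_le LeastI dest: not_less_Least)
  moreover have "i0 < length x"
    using \<open>i0 \<le> i\<close> Suc.prems(1) by simp
  ultimately obtain j where j: "j < i0" "x ! j = b"
    using assms(1) unfolding rgf_def by (metis diff_Suc_1 le_add1 plus_1_eq_Suc)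
  then have "j < i" "j < length x"
    using \<open>i0 \<le> i\<close> \<open>i0 < length x\<close> by simp_all
  show ?case
  proof (cases "a = b")
    case True
    then show ?thesis using j \<open>j < i\<close> by blast
  next
    case False
    then have "a < x ! j" using Suc.prems(2) Suc.hyps(2) j(2) by simp
    then obtain q where "q < j" "x ! q = a"
      using Suc.hyps(1) j(2) \<open>j < length x\<close> by blast
    then show ?thesis using \<open>j < i\<close> by (intro exI[of _ q]) simp
  qed
qed

lemma rgf_mem_prefix:
  assumes "rgf x" "x = us @ b # vs" "a < b"
  shows "a \<in> set us"
proof -
  have "length us < length x" "x ! length us = b" using assms(2) by auto
  then obtain j where "j < length us" "x ! j = a"
    using rgf_occurs_before[OF assms(1)] assms(3) by metis
  then show ?thesis using assms(2) by (metis nth_append nth_mem)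
qed

lemma rgf_subseq_Cons_less:
  assumes "rgf x" "subseq (b # zs) x" "a < b"
  shows "subseq (a # b # zs) x"
proof -
  obtain us vs where x: "x = us @ b # vs" and "subseq zs vs"
    using list_emb_ConsD[OF assms(2)] by auto
  moreover obtain r1 r2 where "us = r1 @ a # r2"
    using rgf_mem_prefix[OF assms(1) x assms(3)] by (meson split_list)
  ultimately show ?thesis by (simp add: list_emb_append2)
qed

lemma rgf_contains_Cons:
  assumes "rgf x" "contains x p" "k \<in> set p" "k < hd p"
  shows "contains x (k # p)"
proof -
  obtain ys where ys: "subseq ys x" "red ys = p"
    using assms(2) unfolding contains_def by blast
  obtain j where j: "j < length ys" "red ys ! j = k"
    using assms(3) ys(2) by (auto simp: in_set_conv_nth)
  then obtain y ys' where ys_Cons: "ys = y # ys'"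
    by (cases ys) auto
  have "hd p = red ys ! 0"
    unfolding ys(2)[symmetric] ys_Cons by (simp add: red_def)
  then have "red ys ! j < red ys ! 0"
    using assms(4) j by simp
  then have "ys ! j < y"
    using nth_red_less_iff[of j ys 0] j ys_Cons by simp
  then have "subseq (ys ! j # ys) x"
    using rgf_subseq_Cons_less[OF assms(1)] ys(1) ys_Cons by simp
  moreover have "red (ys ! j # ys) = k # p"
    using j ys(2) red_Cons_mem[OF nth_mem[OF j(1)]] by (simp add: red_def)
  ultimately show ?thesis unfolding contains_def by blast
qed

lemma rgf_contains_0121_if_021:
  assumes "rgf x" "contains x [0,2,1]"
  shows "contains x [0,1,2,1]"
proof -
  obtain ys where ys: "subseq ys x" "red ys = [0,2,1]"
    using assms(2) unfolding contains_def by blast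
  have "length ys = length (red ys)" by simp
  then have "length ys = 3" using ys(2) by simp
  then obtain u v w where ys_eq: "ys = [u, v, w]"
    by (auto simp: length_Suc_conv numeral_eq_Suc)
  have "u < w" "w < v"
    using nth_red_less_iff[of 0 ys 2] nth_red_less_iff[of 2 ys 1] ys(2) ys_eq by simp_all
  have "subseq [v, w] x"
    using ys(1) unfolding ys_eq by (rule subseq_Cons')
  then have "subseq [w, v, w] x"
    using \<open>w < v\<close> by (rule rgf_subseq_Cons_less[OF assms(1)])
  then have "subseq [u, w, v, w] x"
    using \<open>u < w\<close> by (rule rgf_subseq_Cons_less[OF assms(1)])
  moreover have "red [u, w, v, w] = [0,1,2,1]"
  proof -
    have "strict_mono_on {0, 1, 2} ((!) [u, w, v])"
      using \<open>u < w\<close> \<open>w < v\<close> by (auto simp: strict_mono_on_def numeral_eq_Suc less_Suc_eq)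
    then have "red (map ((!) [u, w, v]) [0,1,2,1]) = red [0,1,2,1]"
      by (intro red_map_strict_mono) (simp add: insert_commute)
    also have "\<dots> = [0,1,2,1]"
      by (rule red_eq_self[where n = 3]) auto
    finally show ?thesis by simp
  qed
  ultimately show ?thesis unfolding contains_def by blast
qed

theorem lemma2p2:
  fixes x :: "nat list"
  assumes "ascent_seq x" and "rgf x"
  shows "(contains x [0,1,0,1] \<longleftrightarrow> contains x [1,0,1])
       \<and> (contains x [0,1,0,2] \<longleftrightarrow> contains x [1,0,2])
       \<and> (contains x [0,1,2,0] \<longleftrightarrow> contains x [1,2,0])
       \<and> (contains x [0,1,2,1] \<longleftrightarrow> contains x [0,2,1])"
proof -
  have deletions: "contains [0,1,0,1] [1,0,1]" "contains [0,1,0,2] [1,0,2]"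
      "contains [0,1,2,0] [1,2,0]" "contains [0,1,2,1] [0,2,1]"
    by (rule contains_reduced_subseq[where n = 2], simp, fastforce)
      (rule contains_reduced_subseq[where n = 3], simp, fastforce)+
  have "contains x (0 # p)" if "contains x p" "p \<in> {[1,0,1], [1,0,2], [1,2,0]}" for p
    using rgf_contains_Cons[OF assms(2) that(1)] that(2) by auto
  then show ?thesis
    using deletions contains_trans rgf_contains_0121_if_021[OF assms(2)] by blast
qed

end
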